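(* Let $G$ be a prime $\{P_5,\overline{P_5},C_5\}$-free graph. Then $G$ has an antisimplicial vertex, or $G$ admits a 1-join.
   Context: All graphs are finite and simple. $P_n$ is the path on $n$ vertices, $C_n$ the cycle of length $n$, $\overline{G}$ the complement. $G$ is $H$-free if it has no induced subgraph isomorphic to $H$. A vertex $b\notin X$ is mixed on $X$ if it has both a neighbor and a non-neighbor in $X$. A homogeneous set is a set $X\subseteq V(G)$ with $1<|X|<|V(G)|$ such that no vertex outside $X$ is mixed on $X$. $G$ is prime if $|V(G)|\ge4$ and has no homogeneous set. A vertex $v$ is antisimplicial if $V(G)\setminus N(v)$ is a stable set. $G$ admits a 1-join if $V(G)$ can be partitioned into four non-empty pairwise disjoint sets $(A,B,C,D)$ such that $A$ is anticomplete to $C\cup D$ (no edges between them), and $B$ is complete to $C$ (all edges present) and anticomplete to $D$. *)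

theory Defs
  imports Main
begin

text \<open>A finite simple graph: vertex set V and adjacency relation E on V,
  symmetric and irreflexive. Only the restriction of E to V matters.\<close>

definition graph :: "'a set \<Rightarrow> ('a \<Rightarrow> 'a \<Rightarrow> bool) \<Rightarrow> bool" where
  "graph V E \<longleftrightarrow> finite V \<and> (\<forall>x\<in>V. \<forall>y\<in>V. E x y \<longleftrightarrow> E y x) \<and> (\<forall>x\<in>V. \<not> E x x)"

definition induced_sub :: "'b set \<Rightarrow> ('b \<Rightarrow> 'b \<Rightarrow> bool) \<Rightarrow> 'a set \<Rightarrow> ('a \<Rightarrow> 'a \<Rightarrow> bool) \<Rightarrow> bool" where
  "induced_sub W F V E \<longleftrightarrow> (\<exists>f. inj_on f W \<and> f ` W \<subseteq> V \<and>
      (\<forall>x\<in>W. \<forall>y\<in>W. E (f x) (f y) \<longleftrightarrow> F x y))"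

definition H_free :: "'b set \<Rightarrow> ('b \<Rightarrow> 'b \<Rightarrow> bool) \<Rightarrow> 'a set \<Rightarrow> ('a \<Rightarrow> 'a \<Rightarrow> bool) \<Rightarrow> bool" where
  "H_free W F V E \<longleftrightarrow> \<not> induced_sub W F V E"

definition compl_adj :: "('a \<Rightarrow> 'a \<Rightarrow> bool) \<Rightarrow> 'a \<Rightarrow> 'a \<Rightarrow> bool" where
  "compl_adj E x y \<longleftrightarrow> x \<noteq> y \<and> \<not> E x y"

definition path_adj :: "nat \<Rightarrow> nat \<Rightarrow> bool" where
  "path_adj i j \<longleftrightarrow> i = Suc j \<or> j = Suc i"

definition cycle_adj :: "nat \<Rightarrow> nat \<Rightarrow> nat \<Rightarrow> bool" where
  "cycle_adj n i j \<longleftrightarrow> i \<noteq> j \<and> (i = Suc j mod n \<or> j = Suc i mod n)"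

definition P5_free :: "'a set \<Rightarrow> ('a \<Rightarrow> 'a \<Rightarrow> bool) \<Rightarrow> bool" where
  "P5_free V E \<longleftrightarrow> H_free {0..<5::nat} path_adj V E"

definition coP5_free :: "'a set \<Rightarrow> ('a \<Rightarrow> 'a \<Rightarrow> bool) \<Rightarrow> bool" where
  "coP5_free V E \<longleftrightarrow> H_free {0..<5::nat} (compl_adj path_adj) V E"

definition C5_free :: "'a set \<Rightarrow> ('a \<Rightarrow> 'a \<Rightarrow> bool) \<Rightarrow> bool" where
  "C5_free V E \<longleftrightarrow> H_free {0..<5::nat} (cycle_adj 5) V E"

definition nbhd :: "'a set \<Rightarrow> ('a \<Rightarrow> 'a \<Rightarrow> bool) \<Rightarrow> 'a \<Rightarrow> 'a set" where
  "nbhd V E v = {u \<in> V. E v u}"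

definition mixed_on :: "('a \<Rightarrow> 'a \<Rightarrow> bool) \<Rightarrow> 'a \<Rightarrow> 'a set \<Rightarrow> bool" where
  "mixed_on E b X \<longleftrightarrow> (\<exists>x\<in>X. E b x) \<and> (\<exists>y\<in>X. \<not> E b y)"

definition homogeneous_set :: "'a set \<Rightarrow> ('a \<Rightarrow> 'a \<Rightarrow> bool) \<Rightarrow> 'a set \<Rightarrow> bool" where
  "homogeneous_set V E X \<longleftrightarrow> X \<subseteq> V \<and> 1 < card X \<and> card X < card V \<and>
     (\<forall>b\<in>V - X. \<not> mixed_on E b X)"

definition prime_graph :: "'a set \<Rightarrow> ('a \<Rightarrow> 'a \<Rightarrow> bool) \<Rightarrow> bool" where
  "prime_graph V E \<longleftrightarrow> card V \<ge> 4 \<and> \<not> (\<exists>X. homogeneous_set V E X)"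

definition stable_set :: "('a \<Rightarrow> 'a \<Rightarrow> bool) \<Rightarrow> 'a set \<Rightarrow> bool" where
  "stable_set E S \<longleftrightarrow> (\<forall>x\<in>S. \<forall>y\<in>S. \<not> E x y)"

definition antisimplicial :: "'a set \<Rightarrow> ('a \<Rightarrow> 'a \<Rightarrow> bool) \<Rightarrow> 'a \<Rightarrow> bool" where
  "antisimplicial V E v \<longleftrightarrow> v \<in> V \<and> stable_set E (V - nbhd V E v)"

definition complete_to :: "('a \<Rightarrow> 'a \<Rightarrow> bool) \<Rightarrow> 'a set \<Rightarrow> 'a set \<Rightarrow> bool" where
  "complete_to E X Y \<longleftrightarrow> (\<forall>x\<in>X. \<forall>y\<in>Y. E x y)"

definition anticomplete_to :: "('a \<Rightarrow> 'a \<Rightarrow> bool) \<Rightarrow> 'a set \<Rightarrow> 'a set \<Rightarrow> bool" where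
  "anticomplete_to E X Y \<longleftrightarrow> (\<forall>x\<in>X. \<forall>y\<in>Y. \<not> E x y)"

definition one_join :: "'a set \<Rightarrow> ('a \<Rightarrow> 'a \<Rightarrow> bool) \<Rightarrow> bool" where
  "one_join V E \<longleftrightarrow> (\<exists>A B C D.
      A \<noteq> {} \<and> B \<noteq> {} \<and> C \<noteq> {} \<and> D \<noteq> {} \<and>
      A \<union> B \<union> C \<union> D = V \<and>
      A \<inter> B = {} \<and> A \<inter> C = {} \<and> A \<inter> D = {} \<and>
      B \<inter> C = {} \<and> B \<inter> D = {} \<and> C \<inter> D = {} \<and>
      anticomplete_to E A (C \<union> D) \<and>
      complete_to E B C \<and> anticomplete_to E B D)"

end

theory Submission
  imports Defs "HOL-Library.List_Lexorder"
begin

text \<open>The class of {P5, co-P5, C5}-free graphs is closed under complementation, so we may work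
in the complement H of G. Let z be the last vertex of a LexBFS ordering of H. Taking an induced
P4 x - z - y - w of H whose vertices x, y, w are as early as possible in the ordering, repeated use of
the four-point property of LexBFS produces earlier and earlier vertices; each of them either yields
an induced P5, house (= co-P5) or C5, or an earlier such P4. Hence z is not an inner vertex of an induced P4
of H, i.e. not an end of an induced P4 of G. In a prime graph this forces the non-neighbours of z to
be stable: a component of size at least two among them would be a homogeneous set.\<close>

section \<open>Forbidden induced subgraphs and complementation\<close>

lemma induced_sub_5I:
  assumes "distinct [v0, v1, v2, v3, v4]" "{v0, v1, v2, v3, v4} \<subseteq> V"
    and "\<And>i j. i < 5 \<Longrightarrow> j < 5 \<Longrightarrow> E ([v0, v1, v2, v3, v4] ! i) ([v0, v1, v2, v3, v4] ! j) \<longleftrightarrow> F i j"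
  shows "induced_sub {0..<5} F V E"
  unfolding induced_sub_def
proof (intro exI conjI)
  show "inj_on (nth [v0, v1, v2, v3, v4]) {0..<5}"
    using assms(1) by (intro inj_on_nth) auto
  show "nth [v0, v1, v2, v3, v4] ` {0..<5} \<subseteq> V"
    using assms(2) by (auto simp: less_Suc_eq numeral_eq_Suc)
qed (use assms(3) in auto)

lemma less_5_cases: "(i::nat) < 5 \<Longrightarrow> i = 0 \<or> i = 1 \<or> i = 2 \<or> i = 3 \<or> i = 4"
  by auto

lemma graph_sym: "graph V E \<Longrightarrow> x \<in> V \<Longrightarrow> y \<in> V \<Longrightarrow> E x y \<longleftrightarrow> E y x"
  and graph_irrefl: "graph V E \<Longrightarrow> x \<in> V \<Longrightarrow> \<not> E x x"
  unfolding graph_def by blast+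

lemma no_induced_P5:
  assumes "graph V E" "P5_free V E" "{a, b, c, d, e} \<subseteq> V"
    and "E a b" "E b c" "E c d" "E d e"
    and "\<not> E a c" "\<not> E a d" "\<not> E a e" "\<not> E b d" "\<not> E b e" "\<not> E c e"
  shows False
proof -
  have "induced_sub {0..<5} path_adj V E"
  proof (rule induced_sub_5I)
    show "distinct [a, b, c, d, e]"
      using assms graph_irrefl[OF assms(1)] graph_sym[OF assms(1)] by auto
    fix i j :: nat assume "i < 5" "j < 5"
    then show "E ([a, b, c, d, e] ! i) ([a, b, c, d, e] ! j) \<longleftrightarrow> path_adj i j"
      using less_5_cases[OF \<open>i < 5\<close>] less_5_cases[OF \<open>j < 5\<close>] assms(3-)
      by (elim disjE) (simp_all add: path_adj_def graph_irrefl[OF assms(1)] graph_sym[OF assms(1)])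
  qed (use assms(3) in auto)
  with assms(2) show False unfolding P5_free_def H_free_def by blast
qed

text \<open>The complement of this house is the path a - c - r - d - b.\<close>

lemma no_induced_house:
  assumes "graph V E" "coP5_free V E" "{a, b, c, d, r} \<subseteq> V"
    and "E a b" "E b c" "E c d" "E d a" "\<not> E a c" "\<not> E b d"
    and "E r a" "E r b" "\<not> E r c" "\<not> E r d"
  shows False
proof -
  have "induced_sub {0..<5} (compl_adj path_adj) V E"
  proof (rule induced_sub_5I)
    show "distinct [a, c, r, d, b]"
      using assms graph_irrefl[OF assms(1)] graph_sym[OF assms(1)] by auto
    fix i j :: nat assume "i < 5" "j < 5"
    then show "E ([a, c, r, d, b] ! i) ([a, c, r, d, b] ! j) \<longleftrightarrow> compl_adj path_adj i j"
      using less_5_cases[OF \<open>i < 5\<close>] less_5_cases[OF \<open>j < 5\<close>] assms(3-)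
      by (elim disjE) (simp_all add: compl_adj_def path_adj_def graph_irrefl[OF assms(1)] graph_sym[OF assms(1)])
  qed (use assms(3) in auto)
  with assms(2) show False unfolding coP5_free_def H_free_def by blast
qed

lemma no_induced_C5:
  assumes "graph V E" "C5_free V E" "{a, b, c, d, e} \<subseteq> V"
    and "E a b" "E b c" "E c d" "E d e" "E e a"
    and "\<not> E a c" "\<not> E a d" "\<not> E b d" "\<not> E b e" "\<not> E c e"
  shows False
proof -
  have "induced_sub {0..<5} (cycle_adj 5) V E"
  proof (rule induced_sub_5I)
    show "distinct [a, b, c, d, e]"
      using assms graph_irrefl[OF assms(1)] graph_sym[OF assms(1)] by auto
    fix i j :: nat assume "i < 5" "j < 5"
    then show "E ([a, b, c, d, e] ! i) ([a, b, c, d, e] ! j) \<longleftrightarrow> cycle_adj 5 i j"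
      using less_5_cases[OF \<open>i < 5\<close>] less_5_cases[OF \<open>j < 5\<close>] assms(3-)
      by (elim disjE) (simp_all add: cycle_adj_def graph_irrefl[OF assms(1)] graph_sym[OF assms(1)])
  qed (use assms(3) in auto)
  with assms(2) show False unfolding C5_free_def H_free_def by blast
qed

lemma graph_compl_adj: "graph V E \<Longrightarrow> graph V (compl_adj E)"
  unfolding graph_def compl_adj_def by blast

lemma induced_sub_compl_adj:
  assumes "graph V E" "induced_sub W F V (compl_adj E)"
  shows "induced_sub W (compl_adj F) V E"
proof -
  obtain f where f: "inj_on f W" "f ` W \<subseteq> V" "\<forall>x\<in>W. \<forall>y\<in>W. compl_adj E (f x) (f y) \<longleftrightarrow> F x y"
    using assms(2) unfolding induced_sub_def by blast
  have "E (f x) (f y) \<longleftrightarrow> compl_adj F x y" if "x \<in> W" "y \<in> W" for x y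
  proof (cases "x = y")
    case True
    then show ?thesis using f that graph_irrefl[OF assms(1)] unfolding compl_adj_def by auto
  next
    case False
    then have "f x \<noteq> f y" using f(1) that by (meson inj_onD)
    then show ?thesis using f(3) that False unfolding compl_adj_def by auto
  qed
  with f show ?thesis unfolding induced_sub_def by blast
qed

lemma induced_sub_relabel:
  assumes "induced_sub W F V E" "inj_on g W'" "g ` W' \<subseteq> W"
    and "\<And>i j. i \<in> W' \<Longrightarrow> j \<in> W' \<Longrightarrow> F (g i) (g j) \<longleftrightarrow> F' i j"
  shows "induced_sub W' F' V E"
proof -
  obtain f where f: "inj_on f W" "f ` W \<subseteq> V" "\<forall>x\<in>W. \<forall>y\<in>W. E (f x) (f y) \<longleftrightarrow> F x y"
    using assms(1) unfolding induced_sub_def by blast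
  have "inj_on (f \<circ> g) W'"
    using f(1) assms(2,3) by (simp add: comp_inj_on inj_on_subset)
  moreover have "(f \<circ> g) ` W' \<subseteq> V"
    using f(2) assms(3) by auto
  moreover have "\<forall>i\<in>W'. \<forall>j\<in>W'. E ((f \<circ> g) i) ((f \<circ> g) j) \<longleftrightarrow> F' i j"
  proof (intro ballI)
    fix i j assume "i \<in> W'" "j \<in> W'"
    then have "g i \<in> W" "g j \<in> W" using assms(3) by auto
    then show "E ((f \<circ> g) i) ((f \<circ> g) j) \<longleftrightarrow> F' i j"
      using f(3) assms(4)[OF \<open>i \<in> W'\<close> \<open>j \<in> W'\<close>] by simp
  qed
  ultimately show ?thesis
    unfolding induced_sub_def by blast
qed

lemma compl_adj_compl_adj: "(\<And>i. \<not> F i i) \<Longrightarrow> compl_adj (compl_adj F) = F"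
  unfolding compl_adj_def by blast

lemma P5_coP5_C5_free_compl_adj:
  assumes "graph V E" "P5_free V E" "coP5_free V E" "C5_free V E"
  shows "P5_free V (compl_adj E)" "coP5_free V (compl_adj E)" "C5_free V (compl_adj E)"
proof -
  show "P5_free V (compl_adj E)"
    using assms(3) induced_sub_compl_adj[OF assms(1)] unfolding P5_free_def coP5_free_def H_free_def by blast
  have "compl_adj (compl_adj path_adj) = path_adj"
    by (rule compl_adj_compl_adj) (simp add: path_adj_def)
  then show "coP5_free V (compl_adj E)"
    using assms(2) induced_sub_compl_adj[OF assms(1), of _ "compl_adj path_adj"]
    unfolding P5_free_def coP5_free_def H_free_def by metis
  have "induced_sub {0..<5} (cycle_adj 5) V E"
    if "induced_sub {0..<5} (compl_adj (cycle_adj 5)) V E"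
  \<comment> \<open>\<open>i \<mapsto> 2 i mod 5\<close> maps C5 onto its complement\<close>
  proof (rule induced_sub_relabel[OF that])
    show "inj_on (\<lambda>i. 2 * i mod 5) {0..<5::nat}"
    proof (rule inj_onI)
      fix i j :: nat assume "i \<in> {0..<5}" "j \<in> {0..<5}" "2 * i mod 5 = 2 * j mod 5"
      then show "i = j"
        using less_5_cases[of i] less_5_cases[of j] by (simp, elim disjE) auto
    qed
    show "(\<lambda>i. 2 * i mod 5) ` {0..<5::nat} \<subseteq> {0..<5}"
      by auto
    fix i j :: nat assume "i \<in> {0..<5}" "j \<in> {0..<5}"
    then show "compl_adj (cycle_adj 5) (2 * i mod 5) (2 * j mod 5) \<longleftrightarrow> cycle_adj 5 i j"
      using less_5_cases[of i] less_5_cases[of j]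
      by (simp, elim disjE) (simp_all add: compl_adj_def cycle_adj_def)
  qed
  then show "C5_free V (compl_adj E)"
    using assms(4) induced_sub_compl_adj[OF assms(1), of _ "cycle_adj 5"]
    unfolding C5_free_def H_free_def by blast
qed

definition induced_P4 :: "('a \<Rightarrow> 'a \<Rightarrow> bool) \<Rightarrow> 'a \<Rightarrow> 'a \<Rightarrow> 'a \<Rightarrow> 'a \<Rightarrow> bool" where
  "induced_P4 A a b c d \<longleftrightarrow> A a b \<and> A b c \<and> A c d \<and> \<not> A a c \<and> \<not> A a d \<and> \<not> A b d"

lemma induced_P4_compl_adj:
  assumes "graph V E" "{a, b, c, d} \<subseteq> V" "induced_P4 E a b c d"
  shows "induced_P4 (compl_adj E) c a d b"
  using assms graph_irrefl[OF assms(1)] graph_sym[OF assms(1)]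
  unfolding induced_P4_def compl_adj_def by auto

section \<open>LexBFS orderings\<close>

text \<open>The four-point characterisation of LexBFS orderings; \<open>pos\<close> is the visiting time.\<close>

definition lexbfs_order :: "'a set \<Rightarrow> ('a \<Rightarrow> 'a \<Rightarrow> bool) \<Rightarrow> ('a \<Rightarrow> nat) \<Rightarrow> bool" where
  "lexbfs_order V A pos \<longleftrightarrow> inj_on pos V \<and>
     (\<forall>a\<in>V. \<forall>b\<in>V. \<forall>c\<in>V. pos a < pos b \<longrightarrow> pos b < pos c \<longrightarrow> A a c \<longrightarrow> \<not> A a b \<longrightarrow>
        (\<exists>d\<in>V. pos d < pos a \<and> A d b \<and> \<not> A d c))"

text \<open>Labels are compared in the lexicographic order of \<open>List_Lexorder\<close>, where \<open>False < True\<close>: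
  an earlier visited neighbour outweighs all later ones, which is the LexBFS rule.\<close>

definition lexbfs_label :: "('a \<Rightarrow> 'a \<Rightarrow> bool) \<Rightarrow> 'a list \<Rightarrow> 'a \<Rightarrow> bool list" where
  "lexbfs_label A xs y = map (\<lambda>x. A x y) xs"

definition lexbfs_next :: "'a set \<Rightarrow> ('a \<Rightarrow> 'a \<Rightarrow> bool) \<Rightarrow> 'a list \<Rightarrow> 'a" where
  "lexbfs_next V A xs = (SOME y. y \<in> V - set xs \<and>
     (\<forall>c\<in>V - set xs. lexbfs_label A xs c \<le> lexbfs_label A xs y))"

primrec lexbfs :: "'a set \<Rightarrow> ('a \<Rightarrow> 'a \<Rightarrow> bool) \<Rightarrow> nat \<Rightarrow> 'a list" where
  "lexbfs V A 0 = []"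
| "lexbfs V A (Suc k) = lexbfs V A k @ [lexbfs_next V A (lexbfs V A k)]"

lemma less_eq_list_first_difference:
  fixes u v :: "bool list"
  assumes "u \<le> v" "length u = length v" "j < length u" "u ! j" "\<not> v ! j"
  shows "\<exists>m<j. \<not> u ! m \<and> v ! m"
proof -
  have "(u, v) \<in> lexord {(a, b). a < b}"
    using assms by (auto simp: list_le_def list_less_def)
  then obtain i where i: "i < length u" "take i u = take i v" "\<not> u ! i" "v ! i"
    using assms(2) by (auto simp: lexord_take_index_conv)
  have "i \<noteq> j"
    using i(3) assms(4) by blast
  moreover have "\<not> j < i"
  proof
    assume "j < i"
    then have "u ! j = v ! j"
      using nth_take[of j i u] nth_take[of j i v] i(2) by simp
    with assms(4,5) show False
      by simp
  qed
  ultimately have "i < j"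
    by simp
  with i show ?thesis by blast
qed

lemma length_lexbfs [simp]: "length (lexbfs V A k) = k"
  by (induction k) auto

lemma lexbfs_next:
  assumes "finite V" "V - set xs \<noteq> {}"
  shows "lexbfs_next V A xs \<in> V - set xs"
    and "\<And>c. c \<in> V - set xs \<Longrightarrow> lexbfs_label A xs c \<le> lexbfs_label A xs (lexbfs_next V A xs)"
proof -
  let ?labels = "lexbfs_label A xs ` (V - set xs)"
  have "finite ?labels" "?labels \<noteq> {}"
    using assms by auto
  then have "Max ?labels \<in> ?labels"
    by (rule Max_in)
  then obtain y where "y \<in> V - set xs" "lexbfs_label A xs y = Max ?labels"
    by (metis imageE)
  moreover have "\<forall>c\<in>V - set xs. lexbfs_label A xs c \<le> lexbfs_label A xs y"
    using \<open>finite ?labels\<close> \<open>lexbfs_label A xs y = Max ?labels\<close> by simp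
  ultimately have "\<exists>y. y \<in> V - set xs \<and> (\<forall>c\<in>V - set xs. lexbfs_label A xs c \<le> lexbfs_label A xs y)"
    by blast
  from someI_ex[OF this] show "lexbfs_next V A xs \<in> V - set xs"
    and "\<And>c. c \<in> V - set xs \<Longrightarrow> lexbfs_label A xs c \<le> lexbfs_label A xs (lexbfs_next V A xs)"
    unfolding lexbfs_next_def by blast+
qed

lemma lexbfs_distinct_subset:
  assumes "finite V" "k \<le> card V"
  shows "distinct (lexbfs V A k) \<and> set (lexbfs V A k) \<subseteq> V"
  using assms(2)
proof (induction k)
  case (Suc k)
  then have IH: "distinct (lexbfs V A k)" "set (lexbfs V A k) \<subseteq> V"
    by auto
  then have "card (set (lexbfs V A k)) = k"
    by (simp add: distinct_card)
  with Suc.prems IH(2) have "V - set (lexbfs V A k) \<noteq> {}"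
    by auto
  from lexbfs_next(1)[OF assms(1) this] IH show ?case
    by auto
qed simp

lemma take_lexbfs: "j \<le> k \<Longrightarrow> take j (lexbfs V A k) = lexbfs V A j"
  by (induction k) (auto simp: le_Suc_eq)

lemma nth_lexbfs: "i < k \<Longrightarrow> lexbfs V A k ! i = lexbfs_next V A (lexbfs V A i)"
  using take_lexbfs[of "Suc i" k V A] nth_take[of i "Suc i" "lexbfs V A k"] by (simp add: nth_append)

lemma lexbfs_four_point:
  assumes fin: "finite V" and L: "L = lexbfs V A (card V)"
    and ijk: "i < j" "j < k" "k < card V"
    and "A (L ! i) (L ! k)" "\<not> A (L ! i) (L ! j)"
  shows "\<exists>m<i. A (L ! m) (L ! j) \<and> \<not> A (L ! m) (L ! k)"
proof -
  define xs where "xs = lexbfs V A j"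
  have L_distinct: "distinct L" and L_V: "set L \<subseteq> V"
    using lexbfs_distinct_subset[OF fin, of "card V" A] unfolding L by simp_all
  have xs: "xs = take j L" "length xs = j"
    using take_lexbfs[of j "card V" V A] ijk unfolding xs_def L by simp_all
  have "L ! j = lexbfs_next V A xs"
    using nth_lexbfs[of j "card V" V A] ijk unfolding xs_def L by simp
  moreover have "L ! k \<in> V - set xs"
  proof
    have "k < length L"
      using ijk unfolding L by simp
    then show "L ! k \<in> V"
      using L_V nth_mem by blast
    show "L ! k \<notin> set xs"
    proof
      assume "L ! k \<in> set xs"
      then obtain m where "m < length xs" "xs ! m = L ! k"
        by (auto simp: in_set_conv_nth)
      with xs have "m < j" "L ! m = L ! k"
        by auto
      with L_distinct ijk show False
        by (simp add: L nth_eq_iff_index_eq)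
    qed
  qed
  ultimately have le: "lexbfs_label A xs (L ! k) \<le> lexbfs_label A xs (L ! j)"
    using lexbfs_next(2)[OF fin, of xs "L ! k" A] by auto
  have label: "lexbfs_label A xs y ! m \<longleftrightarrow> A (L ! m) y" if "m < j" for m y
    using xs that by (simp add: lexbfs_label_def)
  have "\<exists>m<i. \<not> lexbfs_label A xs (L ! k) ! m \<and> lexbfs_label A xs (L ! j) ! m"
  proof (rule less_eq_list_first_difference[OF le])
    show "lexbfs_label A xs (L ! k) ! i" "\<not> lexbfs_label A xs (L ! j) ! i"
      using label[of i] ijk assms(6,7) by simp_all
  qed (use ijk xs(2) in \<open>simp_all add: lexbfs_label_def\<close>)
  then obtain m where "m < i" "\<not> lexbfs_label A xs (L ! k) ! m" "lexbfs_label A xs (L ! j) ! m"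
    by blast
  with label ijk show ?thesis
    by (meson less_trans)
qed

lemma lexbfs_order_exists:
  assumes fin: "finite V"
  shows "\<exists>pos. lexbfs_order V A pos"
proof -
  define L where "L = lexbfs V A (card V)"
  have "distinct L" "set L \<subseteq> V" "length L = card V"
    using lexbfs_distinct_subset[OF fin, of "card V" A] unfolding L_def by simp_all
  then have "set L = V"
    using fin card_subset_eq[OF fin \<open>set L \<subseteq> V\<close>] by (simp add: distinct_card)
  then have bij: "bij_betw (nth L) {..<card V} V"
    using bij_betw_nth[OF \<open>distinct L\<close>] \<open>length L = card V\<close> by simp
  define pos where "pos = the_inv_into {..<card V} (nth L)"
  have pos: "pos v < card V" "L ! pos v = v" if "v \<in> V" for v
    using bij_betw_the_inv_into[OF bij] f_the_inv_into_f_bij_betw[OF bij] that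
    unfolding pos_def bij_betw_def by auto
  have pos_nth: "pos (L ! i) = i" if "i < card V" for i
    using bij that unfolding pos_def bij_betw_def by (simp add: the_inv_into_f_f)
  have "inj_on pos V"
    using pos(2) by (rule inj_on_inverseI)
  moreover have "\<exists>d\<in>V. pos d < pos a \<and> A d b \<and> \<not> A d c"
    if abc: "a \<in> V" "b \<in> V" "c \<in> V" "pos a < pos b" "pos b < pos c" "A a c" "\<not> A a b"
    for a b c
  proof -
    obtain m where m: "m < pos a" "A (L ! m) b" "\<not> A (L ! m) c"
      using lexbfs_four_point[OF fin L_def, of "pos a" "pos b" "pos c"] abc pos by auto
    then have "m < card V"
      using pos(1)[OF abc(1)] by simp
    then have "L ! m \<in> V" "pos (L ! m) = m"
      using \<open>set L = V\<close> \<open>length L = card V\<close> pos_nth by auto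
    with m show ?thesis
      by (intro bexI[of _ "L ! m"]) simp_all
  qed
  ultimately show ?thesis
    unfolding lexbfs_order_def by blast
qed

section \<open>The last vertex of a LexBFS ordering\<close>

locale lexbfs_end =
  fixes V :: "'a set" and A :: "'a \<Rightarrow> 'a \<Rightarrow> bool" and pos :: "'a \<Rightarrow> nat" and z :: 'a
  assumes graph: "graph V A"
    and free: "P5_free V A" "coP5_free V A" "C5_free V A"
    and lexbfs: "lexbfs_order V A pos"
    and z_in_V: "z \<in> V" and z_last: "\<And>v. v \<in> V \<Longrightarrow> pos v \<le> pos z"
begin

lemma adj_sym: "u \<in> V \<Longrightarrow> v \<in> V \<Longrightarrow> A u v \<longleftrightarrow> A v u"
  using graph_sym[OF graph] .

lemma four_point:
  assumes "a \<in> V" "b \<in> V" "c \<in> V" "pos a < pos b" "pos b < pos c" "A a c" "\<not> A a b"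
  obtains d where "d \<in> V" "pos d < pos a" "A d b" "\<not> A d c"
  using lexbfs assms unfolding lexbfs_order_def by blast

lemma pos_less_cases:
  assumes "u \<in> V" "v \<in> V" "u \<noteq> v"
  shows "pos u < pos v \<or> pos v < pos u"
  using lexbfs assms unfolding lexbfs_order_def by (metis inj_onD nat_neq_iff)

lemma before_z: "v \<in> V \<Longrightarrow> v \<noteq> z \<Longrightarrow> pos v < pos z"
  using pos_less_cases[of v z] z_in_V z_last by fastforce

lemmas no_P5 = no_induced_P5[OF graph free(1)]
  and no_house = no_induced_house[OF graph free(2)]
  and no_C5 = no_induced_C5[OF graph free(3)]

end

locale minimal_P4_at_lexbfs_end = lexbfs_end +
  fixes x y w
  assumes in_V: "x \<in> V" "y \<in> V" "w \<in> V"
    and P4: "induced_P4 A x z y w"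
    and minimal: "\<And>x' y' w'. pos x' + pos y' + pos w' < pos x + pos y + pos w \<Longrightarrow>
      x' \<in> V \<Longrightarrow> y' \<in> V \<Longrightarrow> w' \<in> V \<Longrightarrow> \<not> induced_P4 A x' z y' w'"
begin

lemma P4_adj: "A x z" "A z y" "A y w" "\<not> A x y" "\<not> A x w" "\<not> A z w"
  using P4 unfolding induced_P4_def by blast+

lemma no_earlier_P4:
  assumes "u \<in> V"
  shows "pos u < pos x \<Longrightarrow> \<not> induced_P4 A u z y w"
    and "pos u < pos y \<Longrightarrow> \<not> induced_P4 A x z u w"
    and "pos u < pos w \<Longrightarrow> \<not> induced_P4 A x z y u"
  using minimal[of u y w] minimal[of x u w] minimal[of x y u] assms in_V by simp_all

lemmas P4_facts = P4_adj in_V z_in_V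

lemma neighbour_of_x:
  assumes u: "u \<in> V" "A u x" "\<not> A u y" "pos u < pos x"
  shows False
proof (cases "A u z")
  case True
  show False
  proof (cases "A u w")
    case True
    show False
      by (rule no_house[of u z y w x]) (use u \<open>A u z\<close> True P4_facts in \<open>simp_all add: adj_sym\<close>)
  next
    case False
    then have "induced_P4 A u z y w"
      using u \<open>A u z\<close> P4_adj unfolding induced_P4_def by simp
    with no_earlier_P4(1)[OF u(1,4)] show False ..
  qed
next
  case False
  show False
  proof (cases "A u w")
    case True
    show False
      by (rule no_C5[of u x z y w]) (use u \<open>\<not> A u z\<close> True P4_facts in \<open>simp_all add: adj_sym\<close>)
  next
    case False
    show False
      by (rule no_P5[of u x z y w]) (use u \<open>\<not> A u z\<close> False P4_facts in \<open>simp_all add: adj_sym\<close>)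
  qed
qed

lemma neighbour_of_w_off_z:
  assumes u: "u \<in> V" "A u w" "\<not> A u z" "pos u < pos w"
  shows False
proof (cases "A u y")
  case True
  show False
  proof (cases "A u x")
    case True
    show False
      by (rule no_house[of y u x z w]) (use u \<open>A u y\<close> True P4_facts in \<open>simp_all add: adj_sym\<close>)
  next
    case False
    then have "induced_P4 A x z y u"
      using u \<open>A u y\<close> P4_facts unfolding induced_P4_def by (simp add: adj_sym)
    with no_earlier_P4(3)[OF u(1,4)] show False ..
  qed
next
  case False
  show False
  proof (cases "A u x")
    case True
    show False
      by (rule no_C5[of u w y z x]) (use u \<open>\<not> A u y\<close> True P4_facts in \<open>simp_all add: adj_sym\<close>)
  next
    case False
    show False
      by (rule no_P5[of u w y z x]) (use u \<open>\<not> A u y\<close> False P4_facts in \<open>simp_all add: adj_sym\<close>)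
  qed
qed

lemma neighbour_of_w_and_z:
  assumes u: "u \<in> V" "A u w" "A u z" "pos u < pos y"
  shows "A u x \<and> A u y"
proof -
  have "A u x"
  proof (rule ccontr)
    assume "\<not> A u x"
    then have "induced_P4 A x z u w"
      using u P4_facts unfolding induced_P4_def by (simp add: adj_sym)
    with no_earlier_P4(2)[OF u(1,4)] show False ..
  qed
  moreover have "A u y"
  proof (rule ccontr)
    assume "\<not> A u y"
    show False
      by (rule no_house[of u z y w x]) (use u \<open>\<not> A u y\<close> \<open>A u x\<close> P4_facts in \<open>simp_all add: adj_sym\<close>)
  qed
  ultimately show ?thesis ..
qed

lemma w_before_x: "pos w < pos x"
proof (rule ccontr)
  assume "\<not> pos w < pos x"
  moreover have "x \<noteq> w" "w \<noteq> z"
    using P4_facts by (auto simp: adj_sym)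
  ultimately have "pos x < pos w" "pos w < pos z"
    using pos_less_cases[of x w] before_z[of w] P4_facts by auto
  then obtain d where "d \<in> V" "pos d < pos x" "A d w" "\<not> A d z"
    using four_point[of x w z] P4_facts by blast
  with neighbour_of_w_off_z \<open>pos x < pos w\<close> show False
    by (meson less_trans)
qed

lemma y_before_x: "pos y < pos x"
proof (rule ccontr)
  assume "\<not> pos y < pos x"
  moreover have "x \<noteq> y"
    using P4_facts by auto
  ultimately have "pos x < pos y"
    using pos_less_cases[of x y] P4_facts by auto
  then obtain e where "e \<in> V" "pos e < pos w" "A e x" "\<not> A e y"
    using four_point[of w x y] w_before_x P4_facts by (auto simp: adj_sym)
  with neighbour_of_x w_before_x show False
    by (meson less_trans)
qed

lemma common_neighbour_of_x_y:
  obtains d where "d \<in> V" "pos d < pos y" "A d x" "A d y" "\<not> A d z" "\<not> A d w"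
proof -
  have "pos x < pos z"
    using before_z[of x] P4_facts graph_irrefl[OF graph] by auto
  then obtain d where d: "d \<in> V" "pos d < pos y" "A d x" "\<not> A d z"
    using four_point[of y x z] y_before_x P4_facts by (auto simp: adj_sym)
  have "A d y"
    using neighbour_of_x[of d] d y_before_x by (meson less_trans)
  moreover have "\<not> A d w"
  proof
    assume "A d w"
    show False
      by (rule no_house[of y d x z w]) (use d \<open>A d y\<close> \<open>A d w\<close> P4_facts in \<open>simp_all add: adj_sym\<close>)
  qed
  ultimately show thesis
    using that d by blast
qed

lemma w_before_common_neighbour:
  assumes d: "d \<in> V" "pos d < pos y" "A d x" "\<not> A d w"
  shows "pos w < pos d"
proof (rule ccontr)
  assume "\<not> pos w < pos d"
  moreover have "d \<noteq> w"
    using d P4_facts by (auto simp: adj_sym)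
  ultimately have "pos d < pos w"
    using pos_less_cases[of d w] d P4_facts by auto
  then obtain e where e: "e \<in> V" "pos e < pos d" "A e w" "\<not> A e x"
    using four_point[of d w x] w_before_x d P4_facts by blast
  show False
  proof (cases "A e z")
    case True
    then show False
      using neighbour_of_w_and_z[of e] e d by (meson less_trans)
  next
    case False
    then show False
      using neighbour_of_w_off_z[of e] e \<open>pos d < pos w\<close> by (meson less_trans)
  qed
qed

lemma pendant_at_common_neighbour:
  assumes d: "d \<in> V" "pos d < pos y" "A d x" "A d y" "\<not> A d z" "\<not> A d w"
  obtains e where "e \<in> V" "pos e < pos w" "A e d" "\<not> A e x" "\<not> A e z" "\<not> A e y" "\<not> A e w"
proof -
  have "pos w < pos d"
    using w_before_common_neighbour d by blast
  then obtain e where e: "e \<in> V" "pos e < pos w" "A e d" "\<not> A e y"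
    using four_point[of w d y] d P4_facts by (auto simp: adj_sym)
  have "pos e < pos x" "pos e < pos y"
    using e w_before_x \<open>pos w < pos d\<close> d by simp_all
  have "\<not> A e x"
    using neighbour_of_x[of e] e \<open>pos e < pos x\<close> by blast
  moreover have "\<not> A e w"
    using neighbour_of_w_and_z[of e] neighbour_of_w_off_z[of e] e \<open>pos e < pos y\<close> \<open>\<not> A e x\<close>
    by blast
  moreover have "\<not> A e z"
  proof
    assume "A e z"
    then have "induced_P4 A e z y w"
      using e \<open>\<not> A e w\<close> P4_facts unfolding induced_P4_def by simp
    with no_earlier_P4(1)[OF e(1) \<open>pos e < pos x\<close>] show False ..
  qed
  ultimately show thesis
    using that e by blast
qed

lemma minimal_P4_impossible: False
proof -
  obtain d where d: "d \<in> V" "pos d < pos y" "A d x" "A d y" "\<not> A d z" "\<not> A d w"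
    using common_neighbour_of_x_y by blast
  obtain e where e: "e \<in> V" "pos e < pos w" "A e d" "\<not> A e x" "\<not> A e z" "\<not> A e y" "\<not> A e w"
    using pendant_at_common_neighbour[OF d] by blast
  have "pos w < pos d"
    using w_before_common_neighbour d by blast
  then obtain f where f: "f \<in> V" "pos f < pos e" "A f w" "\<not> A f d"
    using four_point[of e w d] d e P4_facts by blast
  have "pos f < pos w" "pos f < pos y"
    using f e d \<open>pos w < pos d\<close> by simp_all
  then have "A f z"
    using neighbour_of_w_off_z[of f] f by blast
  then have "A f x" "A f y"
    using neighbour_of_w_and_z[of f] f \<open>pos f < pos y\<close> by blast+
  show False
  proof (cases "A e f")
    case True
    show False
      by (rule no_house[of y f e d w]) (use d e f True \<open>A f y\<close> P4_facts in \<open>simp_all add: adj_sym\<close>)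
  next
    case False
    show False
      by (rule no_P5[of e d x f w]) (use d e f False \<open>A f x\<close> P4_facts in \<open>simp_all add: adj_sym\<close>)
  qed
qed

end

context lexbfs_end
begin

theorem last_not_P4_midpoint:
  "x \<in> V \<Longrightarrow> y \<in> V \<Longrightarrow> w \<in> V \<Longrightarrow> \<not> induced_P4 A x z y w"
proof (induction "pos x + pos y + pos w" arbitrary: x y w rule: less_induct)
  case less
  show ?case
  proof
    assume "induced_P4 A x z y w"
    then interpret minimal_P4_at_lexbfs_end V A pos z x y w
      using less by unfold_locales auto
    show False
      by (rule minimal_P4_impossible)
  qed
qed

end

section \<open>Antisimplicial vertices of prime graphs\<close>

lemma antisimplicial_if_no_P4_from:
  assumes graph: "graph V E" and prime: "prime_graph V E" and z: "z \<in> V"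
    and no_P4: "\<And>r p q. r \<in> V \<Longrightarrow> p \<in> V \<Longrightarrow> q \<in> V \<Longrightarrow> \<not> induced_P4 E z r p q"
  shows "antisimplicial V E z"
proof (rule ccontr)
  assume "\<not> antisimplicial V E z"
  then obtain x y where xy: "x \<in> V" "y \<in> V" "\<not> E z x" "\<not> E z y" "E x y"
    using z unfolding antisimplicial_def stable_set_def nbhd_def by auto
  define M where "M = {v \<in> V. v \<noteq> z \<and> \<not> E z v}"
  define R where "R = (\<lambda>u v. u \<in> M \<and> v \<in> M \<and> E u v)"
  define K where "K = {v. R\<^sup>*\<^sup>* x v}"
  have "x \<in> M" "y \<in> M"
    using xy z graph_irrefl[OF graph] graph_sym[OF graph] unfolding M_def by auto
  have K_M: "K \<subseteq> M"
  proof
    fix v assume "v \<in> K"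
    then have "R\<^sup>*\<^sup>* x v"
      unfolding K_def by simp
    then show "v \<in> M"
      using \<open>x \<in> M\<close> by (induction rule: rtranclp_induct) (auto simp: R_def)
  qed
  then have "K \<subseteq> V" "z \<notin> K"
    unfolding M_def by auto
  have "x \<in> K" "y \<in> K"
    unfolding K_def using \<open>x \<in> M\<close> \<open>y \<in> M\<close> xy by (auto simp: R_def)
  have "1 < card K"
  proof -
    have "x \<noteq> y"
      using xy graph_irrefl[OF graph] by auto
    with \<open>x \<in> K\<close> \<open>y \<in> K\<close> have "card {x, y} \<le> card K"
      using graph \<open>K \<subseteq> V\<close> by (intro card_mono) (auto simp: graph_def intro: finite_subset)
    with \<open>x \<noteq> y\<close> show ?thesis
      by simp
  qed
  moreover have "card K < card V"
    using \<open>K \<subseteq> V\<close> \<open>z \<notin> K\<close> z graph unfolding graph_def by (metis psubsetI psubset_card_mono)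
  moreover have "\<not> mixed_on E b K" if b: "b \<in> V - K" for b
  proof (cases "b \<in> M")
    case True
    have "\<not> E b v" if "v \<in> K" for v
    proof
      assume "E b v"
      then have "R v b"
        using True that K_M \<open>K \<subseteq> V\<close> b graph_sym[OF graph] unfolding R_def by auto
      with that have "b \<in> K"
        unfolding K_def by auto
      with b show False
        by simp
    qed
    then show ?thesis
      unfolding mixed_on_def by blast
  next
    case False
    with b \<open>z \<notin> K\<close> consider "b = z" | "E z b"
      unfolding M_def by auto
    then show ?thesis
    proof cases
      case 1
      then show ?thesis
        using K_M unfolding mixed_on_def M_def by blast
    next
      case 2
      have "E b v \<longleftrightarrow> E b x" if "v \<in> K" for v
        using that unfolding K_def mem_Collect_eq
      proof (induction rule: rtranclp_induct)
        case (step u v)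
        then have "u \<in> M" "v \<in> M" "E u v"
          unfolding R_def by auto
        then have "E b u \<longleftrightarrow> E b v"
          using no_P4[of b u v] no_P4[of b v u] b \<open>E z b\<close> graph_sym[OF graph]
          unfolding M_def induced_P4_def by auto
        with step.IH show ?case
          by simp
      qed simp
      then show ?thesis
        unfolding mixed_on_def by blast
    qed
  qed
  ultimately have "homogeneous_set V E K"
    unfolding homogeneous_set_def using \<open>K \<subseteq> V\<close> by blast
  with prime show False
    unfolding prime_graph_def by auto
qed

theorem lemma2p7:
  fixes V :: "'a set" and E :: "'a \<Rightarrow> 'a \<Rightarrow> bool"
  assumes "graph V E"
    and "prime_graph V E"
    and "P5_free V E" and "coP5_free V E" and "C5_free V E"
  shows "(\<exists>v\<in>V. antisimplicial V E v) \<or> one_join V E"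
proof -
  have "finite V" "V \<noteq> {}"
    using assms(1,2) unfolding graph_def prime_graph_def by auto
  obtain pos where pos: "lexbfs_order V (compl_adj E) pos"
    using lexbfs_order_exists[OF \<open>finite V\<close>] by blast
  obtain z where z: "z \<in> V" "pos z = Max (pos ` V)"
    using Max_in[of "pos ` V"] \<open>finite V\<close> \<open>V \<noteq> {}\<close> by (metis finite_imageI image_is_empty imageE)
  interpret lexbfs_end V "compl_adj E" pos z
    using graph_compl_adj P5_coP5_C5_free_compl_adj assms pos z \<open>finite V\<close>
    by unfold_locales auto
  have "antisimplicial V E z"
  proof (rule antisimplicial_if_no_P4_from[OF assms(1,2) z(1)])
    fix r p q assume "r \<in> V" "p \<in> V" "q \<in> V"
    then show "\<not> induced_P4 E z r p q"
      using last_not_P4_midpoint induced_P4_compl_adj[OF assms(1)] z(1) by blast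
  qed
  with z(1) show ?thesis
    by blast
qed

end
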